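(* Let $x,y,z\in[0,1]$ satisfy $2y=x+z$. Suppose that \[(1-\{x\})^2+(1-\{z\})^2-2(1-\{y\})^2<2\left(\frac{z-x}{2}\right)^2.\] Then $\min(x,z)<1/2\le y$.
   Context: For $x\in[0,1]$, $\{x\}:=x$ if $x<1/2$ and $\{x\}:=x-1/2$ if $x\ge 1/2$ (this is not the usual fractional part). *)

theory Defs
  imports Complex_Main
begin

definition hfrac :: "real \<Rightarrow> real" where
  "hfrac x = (if x < 1/2 then x else x - 1/2)"

end

theory Submission
  imports Defs
begin

text \<open>On each half of \<open>[0,1]\<close> the map \<open>t \<mapsto> (1 - {t})\<^sup>2\<close> is a translate of \<open>t\<^sup>2\<close>, whose second
  difference at a midpoint is exactly \<open>2((z - x)/2)\<^sup>2\<close>; so the strict inequality fails when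
  \<open>x\<close>, \<open>y\<close>, \<open>z\<close> lie in the same half. If then \<open>y < 1/2\<close>, say \<open>x < 1/2 \<le> z\<close>, the extra \<open>1/2\<close> shift of the
  upper point increases the left-hand side by \<open>5/4 - z \<ge> 1/4\<close>, again contradicting it.\<close>

lemma midpoint_square_identity:
  fixes c x y z :: "'a::field_char_0"
  assumes "2 * y = x + z"
  shows "(c - x)^2 + (c - z)^2 - 2 * (c - y)^2 = 2 * ((z - x) / 2)^2"
proof -
  have y: "y = (x + z) / 2" using assms by (simp add: eq_divide_eq mult.commute)
  show ?thesis unfolding y by (simp add: power2_eq_square field_simps)
qed

lemma hfrac_midpoint_same_half:
  assumes "2 * y = x + z" and "x < 1/2 \<longleftrightarrow> y < 1/2" and "z < 1/2 \<longleftrightarrow> y < 1/2"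
  shows "(1 - hfrac x)^2 + (1 - hfrac z)^2 - 2 * (1 - hfrac y)^2 = 2 * ((z - x) / 2)^2"
proof -
  define c :: real where "c = (if y < 1/2 then 1 else 3/2)"
  have "1 - hfrac t = c - t" if "t < 1/2 \<longleftrightarrow> y < 1/2" for t
    using that by (simp add: hfrac_def c_def)
  then show ?thesis
    using assms midpoint_square_identity[OF assms(1)] by simp
qed

lemma hfrac_midpoint_straddle:
  assumes "2 * y = x + z" and "x < 1/2" and "1/2 \<le> z" and "y < 1/2"
  shows "(1 - hfrac x)^2 + (1 - hfrac z)^2 - 2 * (1 - hfrac y)^2 = 2 * ((z - x) / 2)^2 + (5/4 - z)"
proof -
  have "(1 - x)^2 + (1 - z)^2 - 2 * (1 - y)^2 = 2 * ((z - x) / 2)^2"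
    using midpoint_square_identity[OF assms(1)] .
  moreover have "(1 - (z - 1/2))^2 = (1 - z)^2 + (5/4 - z)"
    by (simp add: power2_eq_square field_simps)
  ultimately show ?thesis
    using assms by (simp add: hfrac_def)
qed

theorem lemma4p2:
  fixes x y z :: real
  assumes "x \<in> {0..1}" and "y \<in> {0..1}" and "z \<in> {0..1}"
    and "2 * y = x + z"
    and "(1 - hfrac x)^2 + (1 - hfrac z)^2 - 2 * (1 - hfrac y)^2 < 2 * ((z - x) / 2)^2"
  shows "min x z < 1/2 \<and> 1/2 \<le> y"
proof (rule ccontr)
  assume "\<not> ?thesis"
  then consider "x < 1/2 \<longleftrightarrow> y < 1/2" "z < 1/2 \<longleftrightarrow> y < 1/2"
    | "x < 1/2" "1/2 \<le> z" "y < 1/2" | "z < 1/2" "1/2 \<le> x" "y < 1/2"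
    using assms(4) by linarith
  then show False
  proof cases
    case 1
    then show False using assms(5) hfrac_midpoint_same_half[OF assms(4)] by simp
  next
    case 2
    then show False using assms(3,5) hfrac_midpoint_straddle[OF assms(4)] by simp
  next
    case 3
    have "2 * y = z + x" using assms(4) by simp
    from hfrac_midpoint_straddle[OF this 3] have
      "(1 - hfrac x)^2 + (1 - hfrac z)^2 - 2 * (1 - hfrac y)^2 = 2 * ((z - x) / 2)^2 + (5/4 - x)"
      by (simp add: power2_eq_square algebra_simps)
    then show False using assms(1,5) by simp
  qed
qed

end
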